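(* Let $C=(C_1,\dots,C_L)$ be a random vector whose components $C_i$ are discrete (finite-valued) and mutually independent, with prior $p(C)=\prod_{i=1}^L p(C_i)$, so that $\mathbb{I}(C;\hat X)$ is bounded from above by $\mathbb{H}(C)$. Let $Z'$ be a noise vector independent of $C$, let $\mathcal{G}$ be a generator, and let $\hat X=\mathcal{G}(Z',C)$ be the generated image. Let $Q(C\mid \hat X)$ be an auxiliary (approximate posterior) conditional distribution of mean-field form, $Q(C\mid\hat X)=\prod_{i=1}^L Q(C_i\mid \hat X)$. Define $$L_{\text{info}}(\mathcal{G},Q)=\mathbb{E}_{C\sim p(C),\,\hat X\sim \mathcal{G}(Z',C)}\big[\log Q(C\mid\hat X)-\log p(C)\big].$$ Then, when $L_{\text{info}}(\mathcal{G},Q)\to \mathbb{I}(C;\hat X)$, the conditional total correlation satisfies $\mathbb{TC}(C\mid\hat X)\to 0$ almost everywhere in $\hat X$.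
   Context: Here $\hat X\sim\mathcal{G}(Z',C)$ denotes sampling from the conditional distribution $p(\hat X\mid C)$ induced by the generator (with randomness from $Z'$ and any internal noise). $\mathbb{I}$ denotes mutual information and $\mathbb{H}$ entropy. For a realization $\hat x$ of $\hat X$, the total correlation of $C$ given $\hat X=\hat x$ is $$\mathbb{TC}(C\mid\hat X=\hat x)=D_{KL}\Big(p(C\mid\hat X=\hat x)\,\Big\|\,\prod_{i=1}^L p(C_i\mid \hat X=\hat x)\Big),$$ where $p(C\mid\hat X)$ is the true posterior and $D_{KL}$ is the Kullback–Leibler divergence. *)

theory Defs
  imports "HOL-Probability.Probability"
begin

text \<open>Latent code C = (C_0,...,C_{L-1}) with C_i taking values in the finite set S i;
  a code is a function c with c \<in> PiE {..<L} S.  The generator G(Z',C) is represented by the conditional law of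
  the image given C, given by densities f c w.r.t. a reference measure M on image space.\<close>

definition joint_prior :: "nat \<Rightarrow> (nat \<Rightarrow> 'a \<Rightarrow> real) \<Rightarrow> (nat \<Rightarrow> 'a) \<Rightarrow> real" where
  "joint_prior L p c = (\<Prod>i<L. p i (c i))"

definition marg_dens ::
  "nat \<Rightarrow> (nat \<Rightarrow> 'a set) \<Rightarrow> (nat \<Rightarrow> 'a \<Rightarrow> real) \<Rightarrow> ((nat \<Rightarrow> 'a) \<Rightarrow> 'b \<Rightarrow> real) \<Rightarrow> 'b \<Rightarrow> real" where
  "marg_dens L S p f x = (\<Sum>c\<in>PiE {..<L} S. joint_prior L p c * f c x)"

definition posterior ::
  "nat \<Rightarrow> (nat \<Rightarrow> 'a set) \<Rightarrow> (nat \<Rightarrow> 'a \<Rightarrow> real) \<Rightarrow> ((nat \<Rightarrow> 'a) \<Rightarrow> 'b \<Rightarrow> real) \<Rightarrow> (nat \<Rightarrow> 'a) \<Rightarrow> 'b \<Rightarrow> real" where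
  "posterior L S p f c x = joint_prior L p c * f c x / marg_dens L S p f x"

definition post_marg ::
  "nat \<Rightarrow> (nat \<Rightarrow> 'a set) \<Rightarrow> (nat \<Rightarrow> 'a \<Rightarrow> real) \<Rightarrow> ((nat \<Rightarrow> 'a) \<Rightarrow> 'b \<Rightarrow> real) \<Rightarrow> nat \<Rightarrow> 'b \<Rightarrow> 'a \<Rightarrow> real" where
  "post_marg L S p f i x v = (\<Sum>c\<in>{c\<in>PiE {..<L} S. c i = v}. posterior L S p f c x)"

definition total_corr_given ::
  "nat \<Rightarrow> (nat \<Rightarrow> 'a set) \<Rightarrow> (nat \<Rightarrow> 'a \<Rightarrow> real) \<Rightarrow> ((nat \<Rightarrow> 'a) \<Rightarrow> 'b \<Rightarrow> real) \<Rightarrow> 'b \<Rightarrow> real" where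
  "total_corr_given L S p f x =
     (\<Sum>c\<in>PiE {..<L} S. posterior L S p f c x *
        ln (posterior L S p f c x / (\<Prod>i<L. post_marg L S p f i x (c i))))"

definition mutual_info ::
  "nat \<Rightarrow> (nat \<Rightarrow> 'a set) \<Rightarrow> (nat \<Rightarrow> 'a \<Rightarrow> real) \<Rightarrow> ((nat \<Rightarrow> 'a) \<Rightarrow> 'b \<Rightarrow> real) \<Rightarrow> 'b measure \<Rightarrow> real" where
  "mutual_info L S p f M =
     (\<integral>x. (\<Sum>c\<in>PiE {..<L} S. joint_prior L p c * f c x *
        ln (posterior L S p f c x / joint_prior L p c)) \<partial>M)"

definition mf_Q :: "nat \<Rightarrow> (nat \<Rightarrow> 'b \<Rightarrow> 'a \<Rightarrow> real) \<Rightarrow> (nat \<Rightarrow> 'a) \<Rightarrow> 'b \<Rightarrow> real" where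
  "mf_Q L q c x = (\<Prod>i<L. q i x (c i))"

definition L_info_integrand ::
  "nat \<Rightarrow> (nat \<Rightarrow> 'a set) \<Rightarrow> (nat \<Rightarrow> 'a \<Rightarrow> real) \<Rightarrow> ((nat \<Rightarrow> 'a) \<Rightarrow> 'b \<Rightarrow> real)
     \<Rightarrow> (nat \<Rightarrow> 'b \<Rightarrow> 'a \<Rightarrow> real) \<Rightarrow> 'b \<Rightarrow> real" where
  "L_info_integrand L S p f q x =
     (\<Sum>c\<in>PiE {..<L} S. joint_prior L p c * f c x * (ln (mf_Q L q c x) - ln (joint_prior L p c)))"

definition L_info ::
  "nat \<Rightarrow> (nat \<Rightarrow> 'a set) \<Rightarrow> (nat \<Rightarrow> 'a \<Rightarrow> real) \<Rightarrow> ((nat \<Rightarrow> 'a) \<Rightarrow> 'b \<Rightarrow> real)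
     \<Rightarrow> (nat \<Rightarrow> 'b \<Rightarrow> 'a \<Rightarrow> real) \<Rightarrow> 'b measure \<Rightarrow> real" where
  "L_info L S p f q M = (\<integral>x. L_info_integrand L S p f q x \<partial>M)"

end

theory Submission
  imports Defs
begin

text \<open>For a fixed image x, the chain rule for relative entropy splits the divergence of the
  posterior p(C | x) from a mean-field Q(C | x) into the total correlation TC(C | x) plus the
  divergences of the posterior marginals from the factors of Q.  By Gibbs' inequality all these
  terms are nonnegative, so TC(C | x) is bounded by that divergence, and weighted with the
  marginal density m(x) the divergence is exactly the integrand of I(C; X) - L_info(G, Q).  Thus
  the nonnegative function m * TC has integral at most a gap tending to 0, so it vanishes
  almost everywhere.\<close>

lemma gibbs_inequality:
  fixes P R :: "'c \<Rightarrow> real"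
  assumes "finite A" and P_nonneg: "\<And>a. a \<in> A \<Longrightarrow> 0 \<le> P a" and "sum P A = 1"
    and "sum R A \<le> 1" and R_nonneg: "\<And>a. a \<in> A \<Longrightarrow> 0 \<le> R a"
    and R_pos: "\<And>a. a \<in> A \<Longrightarrow> 0 < P a \<Longrightarrow> 0 < R a"
  shows "0 \<le> (\<Sum>a\<in>A. P a * ln (P a / R a))"
proof -
  have "P a - R a \<le> P a * ln (P a / R a)" if a: "a \<in> A" for a
  proof (cases "P a = 0")
    case True
    then show ?thesis using R_nonneg[OF a] by simp
  next
    case False
    then have "0 < P a" "0 < R a" using P_nonneg[OF a] R_pos[OF a] by auto
    moreover have "ln (R a / P a) \<le> R a / P a - 1"
      using \<open>0 < P a\<close> \<open>0 < R a\<close> by (intro ln_le_minus_one) simp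
    ultimately have "1 - R a / P a \<le> ln (P a / R a)" by (simp add: ln_div)
    then have "P a * (1 - R a / P a) \<le> P a * ln (P a / R a)"
      using \<open>0 < P a\<close> by (intro mult_left_mono) auto
    moreover have "P a * (1 - R a / P a) = P a - R a" using \<open>0 < P a\<close> by (simp add: field_simps)
    ultimately show ?thesis by simp
  qed
  then have "(\<Sum>a\<in>A. P a - R a) \<le> (\<Sum>a\<in>A. P a * ln (P a / R a))"
    by (rule sum_mono)
  then show ?thesis using assms by (simp add: sum_subtractf)
qed

definition marginal :: "nat \<Rightarrow> (nat \<Rightarrow> 'a set) \<Rightarrow> ((nat \<Rightarrow> 'a) \<Rightarrow> real) \<Rightarrow> nat \<Rightarrow> 'a \<Rightarrow> real" where
  "marginal L S P i v = (\<Sum>c\<in>{c \<in> PiE {..<L} S. c i = v}. P c)"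

lemma sum_PiE_eq_sum_marginal:
  assumes "\<And>i. i < L \<Longrightarrow> finite (S i)" and "i < L"
  shows "(\<Sum>c\<in>PiE {..<L} S. P c * h (c i)) = (\<Sum>v\<in>S i. marginal L S P i v * h v)"
proof -
  have "(\<Sum>v\<in>S i. marginal L S P i v * h v)
      = (\<Sum>v\<in>S i. \<Sum>c\<in>{c \<in> PiE {..<L} S. c i = v}. P c * h (c i))"
    unfolding marginal_def sum_distrib_right by (intro sum.cong) auto
  also have "\<dots> = (\<Sum>c\<in>PiE {..<L} S. P c * h (c i))"
    using assms by (intro sum.group finite_PiE) auto
  finally show ?thesis by simp
qed

lemma sum_marginal:
  assumes "\<And>i. i < L \<Longrightarrow> finite (S i)" and "i < L"
  shows "(\<Sum>v\<in>S i. marginal L S P i v) = (\<Sum>c\<in>PiE {..<L} S. P c)"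
  using sum_PiE_eq_sum_marginal[OF assms, where h = "\<lambda>_. 1"] by simp

lemma marginal_nonneg:
  assumes "\<And>c. c \<in> PiE {..<L} S \<Longrightarrow> 0 \<le> P c"
  shows "0 \<le> marginal L S P i v"
  unfolding marginal_def using assms by (intro sum_nonneg) auto

lemma le_marginal:
  assumes "\<And>i. i < L \<Longrightarrow> finite (S i)" and "\<And>c. c \<in> PiE {..<L} S \<Longrightarrow> 0 \<le> P c"
    and "c \<in> PiE {..<L} S"
  shows "P c \<le> marginal L S P i (c i)"
  unfolding marginal_def using assms finite_PiE[of "{..<L}" S] by (intro member_le_sum) auto


lemma total_correlation_nonneg:
  assumes fin: "\<And>i. i < L \<Longrightarrow> finite (S i)"
    and P_nonneg: "\<And>c. c \<in> PiE {..<L} S \<Longrightarrow> 0 \<le> P c"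
    and P_sum: "(\<Sum>c\<in>PiE {..<L} S. P c) = 1"
  shows "0 \<le> (\<Sum>c\<in>PiE {..<L} S. P c * ln (P c / (\<Prod>i<L. marginal L S P i (c i))))"
proof (rule gibbs_inequality)
  have "(\<Sum>c\<in>PiE {..<L} S. \<Prod>i<L. marginal L S P i (c i)) = (\<Prod>i<L. \<Sum>v\<in>S i. marginal L S P i v)"
    using fin by (subst prod_sum_PiE) auto
  also have "\<dots> = 1"
    using fin P_sum by (simp add: sum_marginal)
  finally show "(\<Sum>c\<in>PiE {..<L} S. \<Prod>i<L. marginal L S P i (c i)) \<le> 1" by simp
  show "0 < (\<Prod>i<L. marginal L S P i (c i))" if "c \<in> PiE {..<L} S" "0 < P c" for c
    using le_marginal[where P = P, OF fin P_nonneg that(1)] that(2)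
    by (intro prod_pos) (auto intro: less_le_trans)
  show "finite (PiE {..<L} S)"
    using fin by (intro finite_PiE) auto
  show "0 \<le> (\<Prod>i<L. marginal L S P i (c i))" for c
    by (intro prod_nonneg marginal_nonneg P_nonneg)
qed (use P_nonneg P_sum in auto)

lemma relative_entropy_product_chain_rule:
  assumes fin: "\<And>i. i < L \<Longrightarrow> finite (S i)"
    and P_nonneg: "\<And>c. c \<in> PiE {..<L} S \<Longrightarrow> 0 \<le> P c"
    and r_pos: "\<And>i v. i < L \<Longrightarrow> v \<in> S i \<Longrightarrow> 0 < r i v"
  shows "(\<Sum>c\<in>PiE {..<L} S. P c * (ln (P c) - ln (\<Prod>i<L. r i (c i))))
       = (\<Sum>c\<in>PiE {..<L} S. P c * ln (P c / (\<Prod>i<L. marginal L S P i (c i))))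
         + (\<Sum>i<L. \<Sum>v\<in>S i. marginal L S P i v * ln (marginal L S P i v / r i v))"
proof -
  let ?Pm = "marginal L S P"
  define h where "h i v = ln (?Pm i v) - ln (r i v)" for i v
  have split: "P c * (ln (P c) - ln (\<Prod>i<L. r i (c i)))
      = P c * ln (P c / (\<Prod>i<L. ?Pm i (c i))) + (\<Sum>i<L. P c * h i (c i))"
    if c: "c \<in> PiE {..<L} S" for c
  proof (cases "P c = 0")
    case False
    then have "0 < P c" using P_nonneg[OF c] by simp
    then have Pm_pos: "0 < ?Pm i (c i)" for i
      using le_marginal[where P = P, OF fin P_nonneg c, of i] by simp
    then have Pm_ne: "?Pm i (c i) \<noteq> 0" for i
      by (simp add: less_imp_neq[symmetric])
    have ln_div_marginals: "ln (P c / (\<Prod>i<L. ?Pm i (c i))) = ln (P c) - (\<Sum>i<L. ln (?Pm i (c i)))"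
      using \<open>0 < P c\<close> Pm_ne by (simp add: ln_div ln_prod)
    have ln_prod_r: "ln (\<Prod>i<L. r i (c i)) = (\<Sum>i<L. ln (r i (c i)))"
      using r_pos c by (intro ln_prod) (auto simp: PiE_iff less_imp_neq[symmetric])
    show ?thesis
      unfolding ln_div_marginals ln_prod_r h_def
      by (simp add: sum_subtractf sum_distrib_left[symmetric] algebra_simps)
  qed simp
  have "(\<Sum>c\<in>PiE {..<L} S. \<Sum>i<L. P c * h i (c i)) = (\<Sum>i<L. \<Sum>v\<in>S i. ?Pm i v * h i v)"
    using fin by (subst sum.swap) (simp add: sum_PiE_eq_sum_marginal)
  moreover have "?Pm i v * h i v = ?Pm i v * ln (?Pm i v / r i v)" if "i < L" "v \<in> S i" for i v
    using marginal_nonneg[where P = P and i = i and v = v, OF P_nonneg] r_pos[OF that]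
    by (cases "?Pm i v = 0") (simp_all add: h_def ln_div)
  ultimately show ?thesis
    by (simp add: split sum.distrib)
qed

lemma total_correlation_le_relative_entropy_product:
  assumes fin: "\<And>i. i < L \<Longrightarrow> finite (S i)"
    and P_nonneg: "\<And>c. c \<in> PiE {..<L} S \<Longrightarrow> 0 \<le> P c"
    and P_sum: "(\<Sum>c\<in>PiE {..<L} S. P c) = 1"
    and r_pos: "\<And>i v. i < L \<Longrightarrow> v \<in> S i \<Longrightarrow> 0 < r i v"
    and r_sum: "\<And>i. i < L \<Longrightarrow> (\<Sum>v\<in>S i. r i v) = 1"
  shows "(\<Sum>c\<in>PiE {..<L} S. P c * ln (P c / (\<Prod>i<L. marginal L S P i (c i))))
       \<le> (\<Sum>c\<in>PiE {..<L} S. P c * (ln (P c) - ln (\<Prod>i<L. r i (c i))))"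
proof -
  have "0 \<le> (\<Sum>v\<in>S i. marginal L S P i v * ln (marginal L S P i v / r i v))" if "i < L" for i
  proof (rule gibbs_inequality)
    show "0 \<le> marginal L S P i v" for v
      by (intro marginal_nonneg P_nonneg)
    show "(\<Sum>v\<in>S i. marginal L S P i v) = 1"
      using fin that P_sum by (simp add: sum_marginal)
  qed (use that fin r_pos r_sum in \<open>auto intro: less_imp_le\<close>)
  then have "0 \<le> (\<Sum>i<L. \<Sum>v\<in>S i. marginal L S P i v * ln (marginal L S P i v / r i v))"
    by (rule sum_nonneg) simp
  then show ?thesis
    using relative_entropy_product_chain_rule[of L S P r, OF fin P_nonneg r_pos] by linarith
qed


lemma AE_eq_0_if_dominated_by_vanishing_integrals:
  fixes g :: "'b \<Rightarrow> real" and D :: "nat \<Rightarrow> 'b \<Rightarrow> real"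
  assumes g_meas: "g \<in> borel_measurable M"
    and g_nonneg: "\<And>x. x \<in> space M \<Longrightarrow> 0 \<le> g x"
    and dominated: "eventually (\<lambda>n. integrable M (D n) \<and> (\<forall>x\<in>space M. g x \<le> D n x)) sequentially"
    and vanishing: "(\<lambda>n. integral\<^sup>L M (D n)) \<longlonglongrightarrow> 0"
  shows "AE x in M. g x = 0"
proof -
  obtain N where N: "\<And>n. N \<le> n \<Longrightarrow> integrable M (D n) \<and> (\<forall>x\<in>space M. g x \<le> D n x)"
    using dominated unfolding eventually_sequentially by blast
  have g_int: "integrable M g"
  proof (rule Bochner_Integration.integrable_bound[of _ "D N"])
    show "AE x in M. norm (g x) \<le> norm (D N x)"
      using N[of N] g_nonneg by (intro AE_I2) force
  qed (use N[of N] g_meas in auto)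
  have "integral\<^sup>L M g \<le> integral\<^sup>L M (D n)" if "N \<le> n" for n
    using N[OF that] g_int by (intro integral_mono) auto
  then have "integral\<^sup>L M g \<le> 0"
    using vanishing by (intro LIMSEQ_le_const) auto
  moreover have "0 \<le> integral\<^sup>L M g"
    using g_nonneg by (rule Bochner_Integration.integral_nonneg)
  ultimately have "integral\<^sup>L M g = 0" by simp
  moreover have "AE x in M. 0 \<le> g x"
    using g_nonneg by (rule AE_I2)
  ultimately show ?thesis
    using integral_nonneg_eq_0_iff_AE[OF g_int] by simp
qed

definition mutual_info_integrand ::
  "nat \<Rightarrow> (nat \<Rightarrow> 'a set) \<Rightarrow> (nat \<Rightarrow> 'a \<Rightarrow> real) \<Rightarrow> ((nat \<Rightarrow> 'a) \<Rightarrow> 'b \<Rightarrow> real) \<Rightarrow> 'b \<Rightarrow> real" where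
  "mutual_info_integrand L S p f x =
     (\<Sum>c\<in>PiE {..<L} S. joint_prior L p c * f c x * ln (posterior L S p f c x / joint_prior L p c))"

lemma mutual_info_eq_integral:
  "mutual_info L S p f M = (\<integral>x. mutual_info_integrand L S p f x \<partial>M)"
  unfolding mutual_info_def mutual_info_integrand_def ..

lemma post_marg_eq_marginal:
  "post_marg L S p f i x v = marginal L S (\<lambda>c. posterior L S p f c x) i v"
  unfolding post_marg_def marginal_def ..


locale generative_model =
  fixes L :: nat and S :: "nat \<Rightarrow> 'a set" and p :: "nat \<Rightarrow> 'a \<Rightarrow> real"
    and M :: "'b measure" and f :: "(nat \<Rightarrow> 'a) \<Rightarrow> 'b \<Rightarrow> real"
  assumes finite_S: "\<And>i. i < L \<Longrightarrow> finite (S i)"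
    and p_nonneg: "\<And>i v. i < L \<Longrightarrow> v \<in> S i \<Longrightarrow> 0 \<le> p i v"
    and p_sum: "\<And>i. i < L \<Longrightarrow> (\<Sum>v\<in>S i. p i v) = 1"
    and f_meas: "\<And>c. c \<in> PiE {..<L} S \<Longrightarrow> f c \<in> borel_measurable M"
    and f_nonneg: "\<And>c x. c \<in> PiE {..<L} S \<Longrightarrow> x \<in> space M \<Longrightarrow> 0 \<le> f c x"
    and f_int: "\<And>c. c \<in> PiE {..<L} S \<Longrightarrow> integrable M (f c)"
begin

lemma finite_codes: "finite (PiE {..<L} S)"
  using finite_S by (intro finite_PiE) auto

lemma joint_prior_nonneg: "c \<in> PiE {..<L} S \<Longrightarrow> 0 \<le> joint_prior L p c"
  unfolding joint_prior_def using p_nonneg by (intro prod_nonneg) (auto simp: PiE_iff)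

lemma sum_joint_prior: "(\<Sum>c\<in>PiE {..<L} S. joint_prior L p c) = 1"
proof -
  have "(\<Sum>c\<in>PiE {..<L} S. joint_prior L p c) = (\<Prod>i<L. \<Sum>v\<in>S i. p i v)"
    unfolding joint_prior_def using finite_S by (subst prod_sum_PiE) auto
  also have "\<dots> = 1"
    using p_sum by simp
  finally show ?thesis .
qed

lemma joint_prior_mult_nonneg:
  "c \<in> PiE {..<L} S \<Longrightarrow> x \<in> space M \<Longrightarrow> 0 \<le> joint_prior L p c * f c x"
  by (simp add: joint_prior_nonneg f_nonneg)

lemma joint_prior_mult_le_marg_dens:
  "c \<in> PiE {..<L} S \<Longrightarrow> x \<in> space M \<Longrightarrow> joint_prior L p c * f c x \<le> marg_dens L S p f x"
  unfolding marg_dens_def using finite_codes joint_prior_mult_nonneg by (intro member_le_sum) auto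

lemma marg_dens_nonneg: "x \<in> space M \<Longrightarrow> 0 \<le> marg_dens L S p f x"
  unfolding marg_dens_def by (intro sum_nonneg joint_prior_mult_nonneg)

lemma marg_dens_mult_posterior:
  assumes "c \<in> PiE {..<L} S" and "x \<in> space M"
  shows "marg_dens L S p f x * posterior L S p f c x = joint_prior L p c * f c x"
proof (cases "marg_dens L S p f x = 0")
  case True
  then have "joint_prior L p c * f c x = 0"
    using joint_prior_mult_le_marg_dens[OF assms] joint_prior_mult_nonneg[OF assms] by simp
  with True show ?thesis by simp
qed (simp add: posterior_def)

lemma posterior_nonneg:
  "c \<in> PiE {..<L} S \<Longrightarrow> x \<in> space M \<Longrightarrow> 0 \<le> posterior L S p f c x"
  unfolding posterior_def by (simp add: joint_prior_mult_nonneg marg_dens_nonneg)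

lemma posterior_le_1:
  assumes "c \<in> PiE {..<L} S" and "x \<in> space M"
  shows "posterior L S p f c x \<le> 1"
  unfolding posterior_def
  using joint_prior_mult_le_marg_dens[OF assms] marg_dens_nonneg[OF assms(2)]
  by (auto simp: divide_le_eq_1)

lemma sum_posterior:
  "0 < marg_dens L S p f x \<Longrightarrow> (\<Sum>c\<in>PiE {..<L} S. posterior L S p f c x) = 1"
  unfolding posterior_def sum_divide_distrib[symmetric] by (simp add: marg_dens_def)

lemma joint_prior_pos_if_posterior_pos:
  "c \<in> PiE {..<L} S \<Longrightarrow> 0 < posterior L S p f c x \<Longrightarrow> 0 < joint_prior L p c"
  using joint_prior_nonneg[of c] by (cases "joint_prior L p c = 0") (auto simp: posterior_def)

lemma mutual_info_integrand_eq:
  assumes "x \<in> space M"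
  shows "mutual_info_integrand L S p f x = marg_dens L S p f x *
    (\<Sum>c\<in>PiE {..<L} S. posterior L S p f c x * ln (posterior L S p f c x / joint_prior L p c))"
  unfolding mutual_info_integrand_def sum_distrib_left
  using assms by (intro sum.cong) (simp_all add: mult.assoc[symmetric] marg_dens_mult_posterior)

lemma L_info_integrand_eq:
  assumes "x \<in> space M"
  shows "L_info_integrand L S p f q x = marg_dens L S p f x *
    (\<Sum>c\<in>PiE {..<L} S. posterior L S p f c x * (ln (mf_Q L q c x) - ln (joint_prior L p c)))"
  unfolding L_info_integrand_def sum_distrib_left
  using assms by (intro sum.cong) (simp_all add: mult.assoc[symmetric] marg_dens_mult_posterior)

lemma mutual_info_integrand_nonneg:
  assumes x: "x \<in> space M"
  shows "0 \<le> mutual_info_integrand L S p f x"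
proof (cases "marg_dens L S p f x = 0")
  case False
  then have "0 < marg_dens L S p f x"
    using marg_dens_nonneg[OF x] by simp
  moreover have "0 \<le> (\<Sum>c\<in>PiE {..<L} S. posterior L S p f c x * ln (posterior L S p f c x / joint_prior L p c))"
    using finite_codes sum_posterior[OF \<open>0 < marg_dens L S p f x\<close>] sum_joint_prior
    by (intro gibbs_inequality) (auto simp: posterior_nonneg x joint_prior_nonneg joint_prior_pos_if_posterior_pos)
  ultimately show ?thesis
    unfolding mutual_info_integrand_eq[OF x] by simp
qed (simp add: mutual_info_integrand_eq[OF x])

lemma mutual_info_integrand_le:
  assumes x: "x \<in> space M"
  shows "mutual_info_integrand L S p f x \<le> (\<Sum>c\<in>PiE {..<L} S. \<bar>ln (joint_prior L p c)\<bar> * (joint_prior L p c * f c x))"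
  unfolding mutual_info_integrand_def
proof (rule sum_mono)
  fix c assume c: "c \<in> PiE {..<L} S"
  let ?\<pi> = "joint_prior L p c" and ?P = "posterior L S p f c x"
  have "?\<pi> * f c x * ln (?P / ?\<pi>) \<le> ?\<pi> * f c x * \<bar>ln ?\<pi>\<bar>"
  proof (cases "?P = 0")
    case False
    then have "0 < ?P" "0 < ?\<pi>"
      using posterior_nonneg[OF c x] joint_prior_pos_if_posterior_pos[OF c, of x] by auto
    then have "ln (?P / ?\<pi>) = ln ?P - ln ?\<pi>"
      by (simp add: ln_div)
    moreover have "ln ?P \<le> 0"
      using \<open>0 < ?P\<close> posterior_le_1[OF c x] by simp
    ultimately have "ln (?P / ?\<pi>) \<le> \<bar>ln ?\<pi>\<bar>"
      by linarith
    then show ?thesis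
      using joint_prior_mult_nonneg[OF c x] by (rule mult_left_mono)
  qed (simp add: joint_prior_mult_nonneg[OF c x])
  then show "?\<pi> * f c x * ln (?P / ?\<pi>) \<le> \<bar>ln ?\<pi>\<bar> * (?\<pi> * f c x)"
    by (simp only: mult.commute)
qed

lemma borel_measurable_marg_dens: "marg_dens L S p f \<in> borel_measurable M"
  unfolding marg_dens_def[abs_def] using f_meas by measurable

lemma borel_measurable_posterior:
  "c \<in> PiE {..<L} S \<Longrightarrow> (\<lambda>x. posterior L S p f c x) \<in> borel_measurable M"
  unfolding posterior_def using f_meas borel_measurable_marg_dens by measurable

lemma borel_measurable_total_corr_given: "total_corr_given L S p f \<in> borel_measurable M"
  unfolding total_corr_given_def[abs_def] post_marg_def using borel_measurable_posterior
  by (intro borel_measurable_sum borel_measurable_times borel_measurable_ln borel_measurable_divide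
      borel_measurable_prod) auto

lemma borel_measurable_mutual_info_integrand: "mutual_info_integrand L S p f \<in> borel_measurable M"
  unfolding mutual_info_integrand_def[abs_def] using f_meas borel_measurable_posterior
  by (intro borel_measurable_sum borel_measurable_times borel_measurable_ln borel_measurable_divide) auto

text \<open>Needed since a non-integrable function has Bochner integral 0: without it, I(C; X) - L_info
  would not be the integral of the difference of the integrands.\<close>

lemma integrable_mutual_info_integrand: "integrable M (mutual_info_integrand L S p f)"
proof (rule Bochner_Integration.integrable_bound)
  show "integrable M (\<lambda>x. \<Sum>c\<in>PiE {..<L} S. \<bar>ln (joint_prior L p c)\<bar> * (joint_prior L p c * f c x))"
    using f_int by (intro Bochner_Integration.integrable_sum integrable_mult_right) auto
  show "AE x in M. norm (mutual_info_integrand L S p f x)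
      \<le> norm (\<Sum>c\<in>PiE {..<L} S. \<bar>ln (joint_prior L p c)\<bar> * (joint_prior L p c * f c x))"
    using mutual_info_integrand_nonneg mutual_info_integrand_le by (intro AE_I2) force
qed (rule borel_measurable_mutual_info_integrand)

lemma marg_dens_mult_total_corr_nonneg:
  assumes x: "x \<in> space M"
  shows "0 \<le> marg_dens L S p f x * total_corr_given L S p f x"
proof (cases "marg_dens L S p f x = 0")
  case False
  then have "0 < marg_dens L S p f x"
    using marg_dens_nonneg[OF x] by simp
  moreover have "0 \<le> total_corr_given L S p f x"
    unfolding total_corr_given_def post_marg_eq_marginal
    using finite_S posterior_nonneg[OF _ x] sum_posterior[OF \<open>0 < marg_dens L S p f x\<close>]
    by (rule total_correlation_nonneg)
  ultimately show ?thesis by simp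
qed simp

lemma mutual_info_integrand_minus_L_info_integrand:
  assumes x: "x \<in> space M"
  shows "mutual_info_integrand L S p f x - L_info_integrand L S p f q x = marg_dens L S p f x *
    (\<Sum>c\<in>PiE {..<L} S. posterior L S p f c x * (ln (posterior L S p f c x) - ln (mf_Q L q c x)))"
proof -
  let ?\<pi> = "joint_prior L p" and ?P = "\<lambda>c. posterior L S p f c x"
  have term_eq: "?P c * ln (?P c / ?\<pi> c) - ?P c * (ln (mf_Q L q c x) - ln (?\<pi> c))
      = ?P c * (ln (?P c) - ln (mf_Q L q c x))" if c: "c \<in> PiE {..<L} S" for c
  proof (cases "?P c = 0")
    case False
    then have "0 < ?P c" "0 < ?\<pi> c"
      using posterior_nonneg[OF c x] joint_prior_pos_if_posterior_pos[OF c, of x] by auto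
    then show ?thesis by (simp add: ln_div algebra_simps)
  qed simp
  have "mutual_info_integrand L S p f x - L_info_integrand L S p f q x = marg_dens L S p f x *
      ((\<Sum>c\<in>PiE {..<L} S. ?P c * ln (?P c / ?\<pi> c))
       - (\<Sum>c\<in>PiE {..<L} S. ?P c * (ln (mf_Q L q c x) - ln (?\<pi> c))))"
    unfolding mutual_info_integrand_eq[OF x] L_info_integrand_eq[OF x] by (simp add: right_diff_distrib)
  also have "(\<Sum>c\<in>PiE {..<L} S. ?P c * ln (?P c / ?\<pi> c))
       - (\<Sum>c\<in>PiE {..<L} S. ?P c * (ln (mf_Q L q c x) - ln (?\<pi> c)))
      = (\<Sum>c\<in>PiE {..<L} S. ?P c * (ln (?P c) - ln (mf_Q L q c x)))"
    unfolding sum_subtractf[symmetric] by (rule sum.cong) (simp_all add: term_eq)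
  finally show ?thesis .
qed

lemma marg_dens_mult_total_corr_le:
  assumes x: "x \<in> space M"
    and q_pos: "\<And>i v. i < L \<Longrightarrow> v \<in> S i \<Longrightarrow> 0 < q i x v"
    and q_sum: "\<And>i. i < L \<Longrightarrow> (\<Sum>v\<in>S i. q i x v) = 1"
  shows "marg_dens L S p f x * total_corr_given L S p f x
    \<le> mutual_info_integrand L S p f x - L_info_integrand L S p f q x"
proof (cases "marg_dens L S p f x = 0")
  case False
  then have "0 < marg_dens L S p f x"
    using marg_dens_nonneg[OF x] by simp
  moreover have "total_corr_given L S p f x
      \<le> (\<Sum>c\<in>PiE {..<L} S. posterior L S p f c x * (ln (posterior L S p f c x) - ln (mf_Q L q c x)))"
    unfolding total_corr_given_def post_marg_eq_marginal mf_Q_def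
    using finite_S posterior_nonneg[OF _ x] sum_posterior[OF \<open>0 < marg_dens L S p f x\<close>] q_pos q_sum
    by (rule total_correlation_le_relative_entropy_product)
  ultimately show ?thesis
    unfolding mutual_info_integrand_minus_L_info_integrand[OF x] by simp
qed (simp add: mutual_info_integrand_minus_L_info_integrand[OF x])

end

theorem lemma1:
  fixes L :: nat
    and S :: "nat \<Rightarrow> 'a set"
    and p :: "nat \<Rightarrow> 'a \<Rightarrow> real"
    and M :: "'b measure"
    and f :: "(nat \<Rightarrow> 'a) \<Rightarrow> 'b \<Rightarrow> real"
    and q :: "nat \<Rightarrow> nat \<Rightarrow> 'b \<Rightarrow> 'a \<Rightarrow> real"
  assumes S_fin: "\<And>i. i < L \<Longrightarrow> finite (S i) \<and> S i \<noteq> {}"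
    and p_nonneg: "\<And>i v. i < L \<Longrightarrow> v \<in> S i \<Longrightarrow> p i v \<ge> 0"
    and p_sum: "\<And>i. i < L \<Longrightarrow> (\<Sum>v\<in>S i. p i v) = 1"
    and f_meas: "\<And>c. c \<in> PiE {..<L} S \<Longrightarrow> f c \<in> borel_measurable M"
    and f_nonneg: "\<And>c x. c \<in> PiE {..<L} S \<Longrightarrow> x \<in> space M \<Longrightarrow> f c x \<ge> 0"
    and f_int: "\<And>c. c \<in> PiE {..<L} S \<Longrightarrow> integrable M (f c)"
    and f_norm: "\<And>c. c \<in> PiE {..<L} S \<Longrightarrow> (\<integral>x. f c x \<partial>M) = 1"
    and q_meas: "\<And>n i v. i < L \<Longrightarrow> v \<in> S i \<Longrightarrow> (\<lambda>x. q n i x v) \<in> borel_measurable M"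
    and q_pos: "\<And>n i x v. i < L \<Longrightarrow> x \<in> space M \<Longrightarrow> v \<in> S i \<Longrightarrow> q n i x v > 0"
    and q_sum: "\<And>n i x. i < L \<Longrightarrow> x \<in> space M \<Longrightarrow> (\<Sum>v\<in>S i. q n i x v) = 1"
    and L_int: "eventually (\<lambda>n. integrable M (L_info_integrand L S p f (q n))) sequentially"
    and conv: "(\<lambda>n. L_info L S p f (q n) M) \<longlonglongrightarrow> mutual_info L S p f M"
  shows "AE x in M. marg_dens L S p f x > 0 \<longrightarrow> total_corr_given L S p f x = 0"
proof -
  interpret generative_model L S p M f
    using S_fin p_nonneg p_sum f_meas f_nonneg f_int by unfold_locales auto
  define gap where "gap n = (\<lambda>x. mutual_info_integrand L S p f x - L_info_integrand L S p f (q n) x)" for n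
  have "AE x in M. marg_dens L S p f x * total_corr_given L S p f x = 0"
  proof (rule AE_eq_0_if_dominated_by_vanishing_integrals)
    show "(\<lambda>x. marg_dens L S p f x * total_corr_given L S p f x) \<in> borel_measurable M"
      using borel_measurable_marg_dens borel_measurable_total_corr_given by measurable
    show "eventually (\<lambda>n. integrable M (gap n)
        \<and> (\<forall>x\<in>space M. marg_dens L S p f x * total_corr_given L S p f x \<le> gap n x)) sequentially"
      using L_int by eventually_elim
        (auto simp: gap_def integrable_mutual_info_integrand intro!: marg_dens_mult_total_corr_le q_pos q_sum)
    have "eventually (\<lambda>n. mutual_info L S p f M - L_info L S p f (q n) M = integral\<^sup>L M (gap n)) sequentially"
      using L_int by eventually_elim
        (simp add: gap_def mutual_info_eq_integral L_info_def integrable_mutual_info_integrand)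
    moreover have "(\<lambda>n. mutual_info L S p f M - L_info L S p f (q n) M) \<longlonglongrightarrow> 0"
      using tendsto_diff[OF tendsto_const conv, of "mutual_info L S p f M"] by simp
    ultimately show "(\<lambda>n. integral\<^sup>L M (gap n)) \<longlonglongrightarrow> 0"
      by (rule Lim_transform_eventually[rotated])
  qed (rule marg_dens_mult_total_corr_nonneg)
  then show ?thesis
    by eventually_elim auto
qed

end
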